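(* Let $n\ge 1$ and let $d$ be a positive integer with $d\le n$. The number of closed walks of length $d$ in the graph $G(n,312)$ is $\binom{2d}{d}$.
   Context: For a sequence $x=x_1\cdots x_m$ of distinct real numbers, its standardization $\Pi(x)$ is the unique permutation $\pi\in\mathfrak S_m$ with $\pi_i<\pi_j \iff x_i<x_j$ for all $i,j$. A permutation $\pi\in\mathfrak S_m$ avoids $312$ if there are no indices $i<j<k$ with $\pi_j<\pi_k<\pi_i$; $\mathfrak S_m(312)$ denotes the set of such permutations. The graph $G(n,312)$ is the directed multigraph with vertex set $\mathfrak S_n(312)$ having, for each $\sigma=\sigma_1\cdots\sigma_{n+1}\in\mathfrak S_{n+1}(312)$, one directed edge labelled $\sigma$ from $\Pi(\sigma_1\cdots\sigma_n)$ (its tail) to $\Pi(\sigma_2\cdots\sigma_{n+1})$ (its head). A closed walk of length $d$ is a list of $d$ edges $(e_1,\dots,e_d)$ with $\mathrm{head}(e_i)=\mathrm{tail}(e_{i+1})$ for $1\le i\le d-1$ and $\mathrm{head}(e_d)=\mathrm{tail}(e_1)$; different cyclic shifts of a closed walk count as different closed walks. *)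

theory Defs
  imports Main
begin

definition perms :: "nat \<Rightarrow> nat list set" where
  "perms m = {p. length p = m \<and> distinct p \<and> set p = {1..m}}"

definition standardize :: "nat list \<Rightarrow> nat list" where
  "standardize xs = map (\<lambda>x. card {y \<in> set xs. y \<le> x}) xs"

definition avoids312 :: "nat list \<Rightarrow> bool" where
  "avoids312 p \<longleftrightarrow> \<not> (\<exists>i j k. i < j \<and> j < k \<and> k < length p \<and> p ! j < p ! k \<and> p ! k < p ! i)"

definition Av312 :: "nat \<Rightarrow> nat list set" where
  "Av312 m = {p \<in> perms m. avoids312 p}"

text \<open>Edges of G(n,312) are labelled by sigma in S_{n+1}(312); tail and head of such an edge.\<close>
definition edge_tail :: "nat list \<Rightarrow> nat list" where
  "edge_tail \<sigma> = standardize (butlast \<sigma>)"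

definition edge_head :: "nat list \<Rightarrow> nat list" where
  "edge_head \<sigma> = standardize (tl \<sigma>)"

definition closed_walks :: "nat \<Rightarrow> nat \<Rightarrow> nat list list set" where
  "closed_walks n d = {es. length es = d \<and> set es \<subseteq> Av312 (n + 1)
      \<and> (\<forall>i. i + 1 < d \<longrightarrow> edge_head (es ! i) = edge_tail (es ! (i + 1)))
      \<and> edge_head (es ! (d - 1)) = edge_tail (es ! 0)}"

end

theory Submission
  imports Defs
begin

text \<open>
  A closed walk \<open>e(0), \<dots>, e(d - 1)\<close> of \<open>G(n,312)\<close> glues together into one linear order on the
  positions \<open>\<nat>\<close>, invariant under shifting by \<open>d\<close>, whose restriction to each window
  \<open>{t, \<dots>, t + n}\<close> has the pattern of the 312-avoiding permutation \<open>e(t mod d)\<close>. Let \<open>r(b)\<close> count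
  the \<open>j \<in> {1..n}\<close> for which \<open>b\<close> lies below \<open>b - j\<close>. By 312-avoidance these \<open>j\<close> form the interval
  \<open>{1..r(b)}\<close>, so for \<open>p < q\<close> the position \<open>q\<close> lies below \<open>p\<close> iff \<open>q - p \<le> r(q)\<close>, and the walk is
  determined by the \<open>d\<close>-periodic sequence \<open>r\<close>. The sequences arising are exactly those with entries
  at most \<open>n\<close> and \<open>r(b - j) + j \<le> r(b)\<close> whenever \<open>1 \<le> j \<le> r(b) < n\<close>.

  Recording, at each zero \<open>r(k) = 0\<close>, one plus the number of \<open>t \<in> {1..<d}\<close> with \<open>r(k + t) = t\<close>
  maps these sequences bijectively (this needs \<open>d \<le> n\<close>) onto the lists of \<open>d\<close> naturals with sum at
  most \<open>d\<close>: the inverse reads \<open>r(b) + 1\<close> off the lattice path \<open>h\<close> with steps \<open>u(k) - 1\<close> as the least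
  \<open>j\<close> with \<open>h(b - j) \<le> h(b)\<close>. Stars and bars counts these lists by \<open>2d choose d\<close>.
\<close>

lemma finite_lists_length_sum_le: "finite {xs::nat list. length xs = k \<and> sum_list xs \<le> m}"
proof -
  have "{xs::nat list. length xs = k \<and> sum_list xs \<le> m} \<subseteq> {xs. set xs \<subseteq> {..m} \<and> length xs = k}"
    by (auto dest: member_le_sum_list)
  moreover have "finite {xs. set xs \<subseteq> {..m::nat} \<and> length xs = k}"
    by (rule finite_lists_length_eq) auto
  ultimately show ?thesis by (rule finite_subset)
qed

lemma card_lists_length_sum_le: "card {xs::nat list. length xs = k \<and> sum_list xs \<le> m} = (m + k) choose k"
proof (induction k arbitrary: m)
  case 0
  have "{xs::nat list. length xs = 0 \<and> sum_list xs \<le> m} = {[]}" by auto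
  then show ?case by simp
next
  case (Suc k)
  have eq: "{xs::nat list. length xs = Suc k \<and> sum_list xs \<le> m} =
     (\<Union>x\<in>{..m}. (#) x ` {ys. length ys = k \<and> sum_list ys \<le> m - x})"
  proof (rule set_eqI, rule iffI)
    fix xs assume "xs \<in> {xs::nat list. length xs = Suc k \<and> sum_list xs \<le> m}"
    then obtain x ys where "xs = x # ys" "length ys = k" "x + sum_list ys \<le> m"
      by (cases xs) auto
    then show "xs \<in> (\<Union>x\<in>{..m}. (#) x ` {ys. length ys = k \<and> sum_list ys \<le> m - x})"
      by (intro UN_I[of x]) auto
  qed auto
  have "card {xs::nat list. length xs = Suc k \<and> sum_list xs \<le> m} =
     (\<Sum>x\<le>m. card ((#) x ` {ys::nat list. length ys = k \<and> sum_list ys \<le> m - x}))"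
    unfolding eq
    by (rule card_UN_disjoint) (auto intro: finite_lists_length_sum_le)
  also have "\<dots> = (\<Sum>x\<le>m. (m - x + k) choose k)"
    by (rule sum.cong) (auto simp: card_image Suc.IH)
  also have "\<dots> = (\<Sum>x\<le>m. (x + k) choose k)"
    by (rule sum.reindex_bij_witness[where i="\<lambda>x. m - x" and j="\<lambda>x. m - x"]) auto
  also have "\<dots> = (\<Sum>x\<le>m. (k + x) choose x)"
    by (rule sum.cong) (use binomial_symmetric[of k "x + k" for x] in \<open>auto simp: add.commute\<close>)
  also have "\<dots> = Suc (k + m) choose m" by (rule sum_choose_lower)
  also have "\<dots> = (m + Suc k) choose Suc k"
    using binomial_symmetric[of m "Suc (k+m)"] by (simp add: add.commute)
  finally show ?case .
qed

lemma standardize_nth_card: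
  assumes "distinct xs" "i < length xs"
  shows "standardize xs ! i = card {j. j < length xs \<and> xs!j \<le> xs!i}"
proof -
  have "{y \<in> set xs. y \<le> xs!i} = (nth xs) ` {j. j < length xs \<and> xs!j \<le> xs!i}"
    by (auto simp: in_set_conv_nth)
  moreover have "inj_on (nth xs) {j. j < length xs \<and> xs!j \<le> xs!i}"
    using assms(1) by (auto simp: inj_on_def nth_eq_iff_index_eq)
  ultimately have "card {y \<in> set xs. y \<le> xs!i} = card {j. j < length xs \<and> xs!j \<le> xs!i}"
    by (simp add: card_image)
  thus ?thesis using assms by (simp add: standardize_def)
qed

lemma length_standardize[simp]: "length (standardize xs) = length xs"
  by (simp add: standardize_def)

lemma standardize_less_iff:
  assumes "distinct xs" "i < length xs" "j < length xs"
  shows "standardize xs ! i < standardize xs ! j \<longleftrightarrow> xs!i < xs!j"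
proof -
  have fin: "finite {k. k < length xs \<and> xs!k \<le> xs!v}" for v by simp
  show ?thesis
  proof
    assume lt: "xs!i < xs!j"
    have sub: "{k. k < length xs \<and> xs!k \<le> xs!i} \<subseteq> {k. k < length xs \<and> xs!k \<le> xs!j}"
      using lt by auto
    have "j \<in> {k. k < length xs \<and> xs!k \<le> xs!j}" using assms by simp
    moreover have "j \<notin> {k. k < length xs \<and> xs!k \<le> xs!i}" using lt by simp
    ultimately have "{k. k < length xs \<and> xs!k \<le> xs!i} \<subset> {k. k < length xs \<and> xs!k \<le> xs!j}"
      using sub by blast
    hence "card {k. k < length xs \<and> xs!k \<le> xs!i} < card {k. k < length xs \<and> xs!k \<le> xs!j}"
      by (rule psubset_card_mono[OF fin])
    thus "standardize xs ! i < standardize xs ! j" using assms by (simp add: standardize_nth_card)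
  next
    assume a: "standardize xs ! i < standardize xs ! j"
    show "xs!i < xs!j"
    proof (rule ccontr)
      assume "\<not> xs!i < xs!j"
      hence "xs!j \<le> xs!i" by simp
      hence "{k. k < length xs \<and> xs!k \<le> xs!j} \<subseteq> {k. k < length xs \<and> xs!k \<le> xs!i}"
        by auto
      hence "card {k. k < length xs \<and> xs!k \<le> xs!j} \<le> card {k. k < length xs \<and> xs!k \<le> xs!i}"
        by (rule card_mono[OF fin])
      thus False using a assms by (simp add: standardize_nth_card)
    qed
  qed
qed

lemma standardize_eq_if_same_order:
  assumes "distinct xs" "distinct ys" "length xs = length ys"
    and pat: "\<And>i j. i < length xs \<Longrightarrow> j < length xs \<Longrightarrow> xs!i < xs!j \<longleftrightarrow> ys!i < ys!j"
  shows "standardize xs = standardize ys"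
proof (rule nth_equalityI)
  show "length (standardize xs) = length (standardize ys)" using assms by simp
  fix i assume "i < length (standardize xs)"
  hence i: "i < length xs" by simp
  have "xs!j \<le> xs!i \<longleftrightarrow> ys!j \<le> ys!i" if "j < length xs" for j
    using pat[OF i that] by (simp add: not_less[symmetric])
  hence "{j. j < length xs \<and> xs!j \<le> xs!i} = {j. j < length ys \<and> ys!j \<le> ys!i}"
    using assms(3) by auto
  thus "standardize xs ! i = standardize ys ! i"
    using standardize_nth_card[OF assms(1) i] standardize_nth_card[OF assms(2)] i assms(3) by simp
qed

lemma permsD:
  assumes "p \<in> perms m"
  shows "length p = m" "distinct p" "set p = {1..m}"
  using assms by (auto simp: perms_def)

lemma standardize_perms:
  assumes "p \<in> perms m"
  shows "standardize p = p"
proof (rule nth_equalityI)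
  show "length (standardize p) = length p" by simp
  fix i assume "i < length (standardize p)"
  hence i: "i < length p" by simp
  have pi: "p!i \<in> {1..m}" using permsD[OF assms] i nth_mem by blast
  have "{y \<in> set p. y \<le> p!i} = {1..p!i}" using permsD(3)[OF assms] pi by auto
  thus "standardize p ! i = p ! i" using i by (simp add: standardize_def)
qed

lemma perms_eq_if_same_order:
  assumes "xs \<in> perms m" "ys \<in> perms m"
    and pat: "\<And>i j. i < m \<Longrightarrow> j < m \<Longrightarrow> xs!i < xs!j \<longleftrightarrow> ys!i < ys!j"
  shows "xs = ys"
proof -
  have "standardize xs = standardize ys"
    by (rule standardize_eq_if_same_order) (use permsD[OF assms(1)] permsD[OF assms(2)] pat in auto)
  thus ?thesis using standardize_perms[OF assms(1)] standardize_perms[OF assms(2)] by simp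
qed

lemma down_closed_eq_atLeastAtMost:
  assumes sub: "S \<subseteq> {1..(n::nat)}"
    and dc: "\<And>j j'. j \<in> S \<Longrightarrow> 1 \<le> j' \<Longrightarrow> j' < j \<Longrightarrow> j' \<in> S"
  shows "S = {1..card S}"
proof (cases "S = {}")
  case True thus ?thesis by simp
next
  case False
  have fin: "finite S" using sub finite_subset by blast
  define M where "M = Max S"
  have MS: "M \<in> S" using Max_in[OF fin False] by (simp add: M_def)
  have "S = {1..M}"
  proof
    show "S \<subseteq> {1..M}" using sub Max_ge[OF fin] by (auto simp: M_def)
    show "{1..M} \<subseteq> S"
    proof
      fix x assume "x \<in> {1..M}"
      thus "x \<in> S" using dc[OF MS] MS by (cases "x = M") auto
    qed
  qed
  thus ?thesis by simp
qed

lemma mod_add_right_cancel_less: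
  assumes "(k + t) mod d = (k' + t) mod (d::nat)" "k < d" "k' < d"
  shows "k = k'"
proof (cases "k \<le> k'")
  case True
  then obtain s where "k' + t = k + t + d * s" using mod_eq_nat2E[OF assms(1)] by auto
  hence "k' = k + d * s" by simp
  with assms show ?thesis by (cases s) auto
next
  case False
  then obtain s where "k + t = k' + t + d * s" using mod_eq_nat1E[OF assms(1)] by auto
  hence "k = k' + d * s" by simp
  with assms show ?thesis by (cases s) auto
qed

lemma inj_on_mod_add_if_determined:
  fixes d :: nat
  assumes "\<And>k t. (k, t) \<in> S \<Longrightarrow> k < d \<and> t = f ((k + t) mod d)"
  shows "inj_on (\<lambda>(k, t). (k + t) mod d) S"
proof (rule inj_onI, clarify)
  fix k t k' t' assume kt: "(k, t) \<in> S" "(k', t') \<in> S" and eq: "(k + t) mod d = (k' + t') mod d"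
  have "t = t'" using assms[OF kt(1)] assms[OF kt(2)] eq by simp
  moreover have "k = k'"
    using eq assms[OF kt(1)] assms[OF kt(2)] mod_add_right_cancel_less[of k t d k'] \<open>t = t'\<close> by simp
  ultimately show "k = k' \<and> t = t'" by simp
qed

lemma skip_free_first_hit:
  fixes G :: "nat \<Rightarrow> int"
  assumes step: "\<And>i. G i - 1 \<le> G (Suc i)" and below: "G (K + s) \<le> v" and above: "v < G K"
  shows "\<exists>t. 1 \<le> t \<and> t \<le> s \<and> G (K + t) = v \<and> (\<forall>m. K \<le> m \<and> m < K + t \<longrightarrow> v < G m)"
proof -
  obtain k where k: "k < s" "\<And>i. i \<le> k \<Longrightarrow> v < G (K + i)" "G (K + Suc k) \<le> v"
    using ex_least_nat_less[of "\<lambda>t. G (K + t) \<le> v" s] below above by (auto simp: not_le)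
  have "G (K + Suc k) = v" using step[of "K + k"] k(2)[of k] k(3) by simp
  moreover have "v < G m" if "K \<le> m" "m < K + Suc k" for m
    using k(2)[of "m - K"] that by simp
  ultimately show ?thesis using k(1) by (intro exI[of _ "Suc k"]) auto
qed

text \<open>A \<open>d\<close>-periodic sequence on \<open>\<nat>\<close> is stored as the list of its first \<open>d\<close> values and read as
  \<open>rs ! (b mod d)\<close>; the guard \<open>j \<le> b\<close> only avoids truncated subtraction.\<close>
definition back_consistent :: "nat \<Rightarrow> nat \<Rightarrow> nat list \<Rightarrow> bool" where
  "back_consistent n d rs \<longleftrightarrow> (\<forall>b j. 1 \<le> j \<longrightarrow> j \<le> rs!(b mod d) \<longrightarrow> rs!(b mod d) < n \<longrightarrow> j \<le> b \<longrightarrow>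
      rs!((b-j) mod d) + j \<le> rs!(b mod d))"

definition admissible :: "nat \<Rightarrow> nat \<Rightarrow> nat list set" where
  "admissible n d = {rs. length rs = d \<and> (\<forall>x\<in>set rs. x \<le> n) \<and> back_consistent n d rs}"

definition zero_code :: "nat \<Rightarrow> nat list \<Rightarrow> nat list" where
  "zero_code d rs = map (\<lambda>k. if rs!k = 0 then 1 + card {t\<in>{1..<d}. rs!((k+t) mod d) = t} else 0) [0..<d]"

definition bounded_sum_lists :: "nat \<Rightarrow> nat list set" where
  "bounded_sum_lists d = {us. length us = d \<and> sum_list us \<le> d}"

lemma back_consistentD:
  assumes "back_consistent n d rs" "1 \<le> j" "j \<le> rs!(b mod d)" "rs!(b mod d) < n" "j \<le> b"
  shows "rs!((b-j) mod d) + j \<le> rs!(b mod d)"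
  using assms unfolding back_consistent_def by blast

lemma back_consistent_less_period:
  assumes "back_consistent n d rs" "rs!(b mod d) < n" "1 \<le> d"
  shows "rs!(b mod d) < d"
proof (rule ccontr)
  assume "\<not> rs!(b mod d) < d"
  hence h: "d \<le> rs!((b+d) mod d)" by simp
  have "rs!((b+d) mod d) < n" using assms(2) by simp
  from back_consistentD[OF assms(1) _ h this] assms(3)
  have "rs!((b+d-d) mod d) + d \<le> rs!((b+d) mod d)" by simp
  thus False using assms(3) by simp
qed

lemma length_zero_code[simp]: "length (zero_code d rs) = d" by (simp add: zero_code_def)

lemma zero_code_nth: "k < d \<Longrightarrow> zero_code d rs ! k =
   (if rs!k = 0 then 1 + card {t\<in>{1..<d}. rs!((k+t) mod d) = t} else 0)"
  by (simp add: zero_code_def)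

text \<open>The hits \<open>(k, t)\<close> with \<open>rs ! k = 0\<close> and \<open>rs ! (k + t) = t \<noteq> 0\<close> land injectively on the nonzero
  entries, so the entries of the code sum to at most \<open>d\<close>.\<close>
lemma zero_code_in_bounded_sum_lists:
  assumes "rs \<in> admissible n d" "1 \<le> d"
  shows "zero_code d rs \<in> bounded_sum_lists d"
proof -
  define Z where "Z = {k\<in>{..<d}. rs!k = 0}"
  define A where "A k = {t\<in>{1..<d}. rs!((k+t) mod d) = t}" for k
  have Z: "Z \<subseteq> {..<d}" "finite Z" by (auto simp: Z_def)
  have "sum_list (zero_code d rs) = (\<Sum>k<d. zero_code d rs ! k)"
    by (simp add: sum_list_sum_nth atLeast0LessThan)
  also have "\<dots> = (\<Sum>k<d. if rs!k = 0 then 1 + card (A k) else 0)"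
    by (rule sum.cong) (auto simp: zero_code_nth A_def)
  also have "\<dots> = card Z + (\<Sum>k\<in>Z. card (A k))"
    unfolding Z_def by (simp add: sum.If_cases Int_def sum_Suc)
  also have "(\<Sum>k\<in>Z. card (A k)) = card (SIGMA k:Z. A k)"
    by (rule card_SigmaI[symmetric]) (auto simp: Z(2) A_def)
  also have "card (SIGMA k:Z. A k) \<le> card ({..<d} - Z)"
  proof (rule card_inj_on_le)
    show "inj_on (\<lambda>(k,t). (k+t) mod d) (SIGMA k:Z. A k)"
      by (rule inj_on_mod_add_if_determined[where f="(!) rs"]) (auto simp: Z_def A_def)
    show "(\<lambda>(k,t). (k+t) mod d) ` (SIGMA k:Z. A k) \<subseteq> {..<d} - Z"
      using assms(2) by (auto simp: A_def Z_def)
  qed simp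
  also have "card ({..<d} - Z) = d - card Z"
    using card_Diff_subset[OF Z(2,1)] by simp
  finally have "sum_list (zero_code d rs) \<le> d"
    using card_mono[OF _ Z(1)] by simp
  thus ?thesis by (simp add: bounded_sum_lists_def)
qed

lemma admissibleD:
  assumes "rs \<in> admissible n d" "1 \<le> d"
  shows "length rs = d" "rs!(b mod d) \<le> n" "back_consistent n d rs"
  using assms by (auto simp: admissible_def)

lemma back_consistent_before:
  assumes "back_consistent n d rs" "rs!(l mod d) = a" "a < n" "l - a \<le> m" "m < l" "a \<le> l"
  shows "rs!(m mod d) + (l - m) \<le> a"
  using back_consistentD[OF assms(1), of "l - m" l] assms by simp

text \<open>Two admissible sequences with the same code cannot differ: at a disagreement where the smaller
  value \<open>a\<close> is least possible, the two sequences agree on the \<open>a\<close> positions before it and both vanish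
  \<open>a\<close> steps back; comparing the code entries there yields a contradiction.\<close>
lemma zero_code_eq_imp_no_least_disagreement:
  assumes rs: "rs \<in> admissible n d" and rs': "rs' \<in> admissible n d"
    and code: "zero_code d rs = zero_code d rs'" and d: "1 \<le> d" "d \<le> n"
    and least: "\<And>b. rs!(b mod d) \<noteq> rs'!(b mod d) \<Longrightarrow> a \<le> min (rs!(b mod d)) (rs'!(b mod d))"
    and la: "rs!(l mod d) = a" and la': "a < rs'!(l mod d)" and ld: "d \<le> l"
  shows False
proof -
  have bc: "back_consistent n d rs" "back_consistent n d rs'" using rs rs' by (simp_all add: admissible_def)
  have an: "a < n" using la' admissibleD(2)[OF rs' d(1), of l] by simp
  have ad: "a < d" using back_consistent_less_period[OF bc(1), of l] an la d by simp
  have "a \<noteq> 0"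
  proof
    assume "a = 0"
    hence "zero_code d rs ! (l mod d) \<noteq> zero_code d rs' ! (l mod d)"
      using la la' d by (simp add: zero_code_nth)
    thus False using code by simp
  qed
  define k where "k = l - a"
  have lk: "l = k + a" using ad ld by (simp add: k_def)
  have agree: "rs'!(m mod d) = rs!(m mod d)" if "k \<le> m" "m < l" for m
    using least[of m] back_consistent_before[OF bc(1) la an, of m] that ad ld by (force simp: k_def)
  have k0: "rs!(k mod d) = 0" "rs'!(k mod d) = 0"
    using back_consistent_before[OF bc(1) la an, of k] agree[of k] lk \<open>a \<noteq> 0\<close> by simp_all
  define A where "A = {t\<in>{1..<d}. rs!((k+t) mod d) = t}"
  define A' where "A' = {t\<in>{1..<d}. rs'!((k+t) mod d) = t}"
  have "zero_code d rs ! (k mod d) = 1 + card A" "zero_code d rs' ! (k mod d) = 1 + card A'"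
    using k0 d by (simp_all add: zero_code_nth A_def A'_def mod_add_left_eq)
  hence card_eq: "card A = card A'" using code by simp
  have "\<exists>t\<in>A'. a < t"
  proof (rule ccontr)
    assume "\<not> (\<exists>t\<in>A'. a < t)"
    have "A' \<subseteq> A - {a}"
    proof
      fix t assume t: "t \<in> A'"
      have "t \<noteq> a" using t la' lk by (auto simp: A'_def)
      hence "t < a" using t \<open>\<not> (\<exists>t\<in>A'. a < t)\<close> by (meson linorder_neqE_nat)
      thus "t \<in> A - {a}" using t agree[of "k + t"] lk by (simp add: A_def A'_def)
    qed
    moreover have "a \<in> A" using la lk \<open>a \<noteq> 0\<close> ad by (simp add: A_def)
    ultimately have "card A' < card A"
      by (intro psubset_card_mono) (auto simp: A_def)
    thus False using card_eq by simp
  qed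
  then obtain t where t: "rs'!((k+t) mod d) = t" "t < d" "a < t" by (auto simp: A'_def)
  have "rs'!((k + t - (t - a)) mod d) + (t - a) \<le> rs'!((k+t) mod d)"
    by (rule back_consistentD[OF bc(2)]) (use t d in auto)
  hence "rs'!(l mod d) \<le> a" using t lk by simp
  thus False using la' by simp
qed

lemma inj_on_zero_code:
  assumes d: "1 \<le> d" "d \<le> n"
  shows "inj_on (zero_code d) (admissible n d)"
proof (rule inj_onI, rule ccontr)
  fix rs rs' assume rs: "rs \<in> admissible n d" and rs': "rs' \<in> admissible n d"
    and code: "zero_code d rs = zero_code d rs'" and "rs \<noteq> rs'"
  let ?diff = "\<lambda>b. rs!(b mod d) \<noteq> rs'!(b mod d)" and ?m = "\<lambda>b. min (rs!(b mod d)) (rs'!(b mod d))"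
  have "length rs = d" "length rs' = d" using rs rs' by (auto simp: admissible_def)
  then obtain b where "b < d" "rs!b \<noteq> rs'!b" using \<open>rs \<noteq> rs'\<close> nth_equalityI by metis
  hence "?diff b" by simp
  then obtain b0 where b0: "?diff b0" and least: "\<And>b. ?diff b \<Longrightarrow> ?m b0 \<le> ?m b"
    using ex_has_least_nat[of ?diff b ?m] by blast
  have l: "(b0 + d) mod d = b0 mod d" "d \<le> b0 + d" by simp_all
  show False
  proof (cases "rs!(b0 mod d) < rs'!(b0 mod d)")
    case True
    show False
      by (rule zero_code_eq_imp_no_least_disagreement[OF rs rs' code d least, of "b0 + d"])
        (use True l in auto)
  next
    case False
    show False
      by (rule zero_code_eq_imp_no_least_disagreement[OF rs' rs code[symmetric] d, of _ "b0 + d"])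
        (use False b0 l least in \<open>auto simp: min.commute\<close>)
  qed
qed

definition height :: "nat \<Rightarrow> nat list \<Rightarrow> nat \<Rightarrow> int" where
  "height d u i = (\<Sum>s\<in>{1..i}. int (u!(s mod d))) - int i"

definition drops_to :: "nat \<Rightarrow> nat list \<Rightarrow> nat \<Rightarrow> nat \<Rightarrow> bool" where
  "drops_to d u b j \<longleftrightarrow> 1 \<le> j \<and> j \<le> d \<and> height d u (b - j) \<le> height d u b"

text \<open>The fallback value \<open>n\<close> is never used when \<open>sum_list u \<le> d\<close> and \<open>d \<le> b\<close>: then
  \<open>height d u (b - d) \<ge> height d u b\<close>.\<close>
definition back_run :: "nat \<Rightarrow> nat \<Rightarrow> nat list \<Rightarrow> nat \<Rightarrow> nat" where
  "back_run n d u b = (if \<exists>j. drops_to d u b j then (LEAST j. drops_to d u b j) - 1 else n)"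

text \<open>Positions are shifted by \<open>d\<close> so that \<open>b - j\<close> with \<open>j \<le> d\<close> never truncates.\<close>
definition zero_decode :: "nat \<Rightarrow> nat \<Rightarrow> nat list \<Rightarrow> nat list" where
  "zero_decode n d u = map (\<lambda>l. back_run n d u (l + d)) [0..<d]"

lemma height_Suc: "height d u (Suc i) = height d u i + int (u!(Suc i mod d)) - 1"
  by (simp add: height_def)

lemma height_period:
  assumes "length u = d" "1 \<le> d"
  shows "height d u d = int (sum_list u) - int d"
proof -
  have "(\<Sum>s\<in>{1..d}. int (u!(s mod d))) = (\<Sum>s\<in>{..<d}. int (u!s))"
    by (rule sum.reindex_bij_witness[where i="\<lambda>b. if b = 0 then d else b" and j="\<lambda>s. s mod d"])
      (use assms(2) in \<open>auto simp: le_less\<close>)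
  also have "\<dots> = int (sum_list u)"
    using assms(1) by (simp add: sum_list_sum_nth atLeast0LessThan)
  finally show ?thesis by (simp add: height_def)
qed

lemma height_add_period:
  assumes "length u = d" "1 \<le> d"
  shows "height d u (i + d) = height d u i + (int (sum_list u) - int d)"
proof (induction i)
  case 0
  then show ?case using height_period[OF assms] by (simp add: height_def)
next
  case (Suc i)
  have "height d u (Suc i + d) = height d u (i + d) + int (u!(Suc (i + d) mod d)) - 1"
    using height_Suc[of d u "i+d"] by simp
  also have "Suc (i + d) mod d = Suc i mod d" by (metis add_Suc mod_add_self2)
  finally show ?case using Suc height_Suc[of d u i] by simp
qed

lemma height_Suc_ge: "height d u i - 1 \<le> height d u (Suc i)"
  by (simp add: height_Suc)

lemma drops_to_add_period:
  assumes "length u = d" "1 \<le> d" "d \<le> b"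
  shows "drops_to d u (b + d) j = drops_to d u b j"
proof (cases "1 \<le> j \<and> j \<le> d")
  case True
  have e: "b + d - j = (b - j) + d" using assms True by simp
  have "height d u (b + d - j) = height d u (b - j) + (int (sum_list u) - int d)"
    unfolding e by (rule height_add_period[OF assms(1,2)])
  moreover have "height d u (b + d) = height d u b + (int (sum_list u) - int d)"
    by (rule height_add_period[OF assms(1,2)])
  ultimately show ?thesis unfolding drops_to_def by simp
next
  case False
  thus ?thesis unfolding drops_to_def by blast
qed

lemma back_run_add_period:
  assumes "length u = d" "1 \<le> d" "d \<le> b"
  shows "back_run n d u (b + d) = back_run n d u b"
proof -
  have "drops_to d u (b + d) = drops_to d u b" using drops_to_add_period[OF assms] by auto
  thus ?thesis by (simp add: back_run_def)
qed

lemma back_run_add_mult_period: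
  assumes "length u = d" "1 \<le> d" "d \<le> b"
  shows "back_run n d u (b + d * q) = back_run n d u b"
proof (induction q)
  case (Suc q)
  have "back_run n d u (b + d * Suc q) = back_run n d u ((b + d * q) + d)" by (simp add: algebra_simps)
  also have "\<dots> = back_run n d u (b + d * q)" by (rule back_run_add_period[OF assms(1,2)]) (use assms(3) in simp)
  finally show ?case using Suc by simp
qed simp

lemma back_run_mod:
  assumes "length u = d" "1 \<le> d"
  shows "back_run n d u (x mod d + d) = back_run n d u (x + d)"
proof -
  have "x + d = (x mod d + d) + d * (x div d)" by simp
  thus ?thesis using back_run_add_mult_period[OF assms, of "x mod d + d" n "x div d"] by simp
qed

lemma length_zero_decode[simp]: "length (zero_decode n d u) = d" by (simp add: zero_decode_def)

lemma zero_decode_nth: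
  assumes "length u = d" "1 \<le> d"
  shows "zero_decode n d u ! (x mod d) = back_run n d u (x + d)"
  using assms back_run_mod[OF assms] by (simp add: zero_decode_def)

lemma Least_drops_to:
  assumes "\<exists>j. drops_to d u b j"
  shows "drops_to d u b (LEAST j. drops_to d u b j)" "1 \<le> (LEAST j. drops_to d u b j)" "(LEAST j. drops_to d u b j) \<le> d"
  using LeastI_ex[OF assms] by (auto simp: drops_to_def)

lemma back_run_le:
  assumes "d \<le> n"
  shows "back_run n d u b \<le> n"
proof (cases "\<exists>j. drops_to d u b j")
  case True
  hence "(LEAST j. drops_to d u b j) \<le> d" by (rule Least_drops_to(3))
  thus ?thesis using True assms by (simp add: back_run_def)
next
  case False
  thus ?thesis by (simp add: back_run_def)
qed

lemma back_run_less_imp_drops_to: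
  assumes "back_run n d u b < n"
  shows "\<exists>j. drops_to d u b j"
  using assms by (auto simp: back_run_def split: if_splits)

lemma zero_decode_admissible:
  assumes u: "length u = d" and d: "1 \<le> d" "d \<le> n"
  shows "zero_decode n d u \<in> admissible n d"
proof -
  have ent: "\<forall>x\<in>set (zero_decode n d u). x \<le> n"
    using back_run_le[OF d(2)] by (auto simp: zero_decode_def)
  have "back_consistent n d (zero_decode n d u)"
    unfolding back_consistent_def
  proof (intro allI impI)
    fix b j
    assume j1: "1 \<le> j" and jr: "j \<le> zero_decode n d u ! (b mod d)" and rn: "zero_decode n d u ! (b mod d) < n"
      and jb: "j \<le> b"
    define B where "B = b + d"
    have RB: "zero_decode n d u ! (b mod d) = back_run n d u B" unfolding B_def by (rule zero_decode_nth[OF u d(1)])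
    have "B - j = (b - j) + d" using jb by (simp add: B_def)
    hence RBj: "zero_decode n d u ! ((b - j) mod d) = back_run n d u (B - j)"
      using zero_decode_nth[OF u d(1), where x="b - j" and n=n] by simp
    have ex: "\<exists>j. drops_to d u B j" by (rule back_run_less_imp_drops_to[where n=n]) (use rn RB in simp)
    define J where "J = (LEAST j. drops_to d u B j)"
    have QJ: "drops_to d u B J" "1 \<le> J" "J \<le> d" using Least_drops_to[OF ex] by (auto simp: J_def)
    have RBJ: "back_run n d u B = J - 1" using ex by (simp add: back_run_def J_def)
    have jJ: "j < J" using jr RB RBJ QJ by simp
    have notQ: "\<not> drops_to d u B j" by (rule not_less_Least) (use jJ in \<open>simp add: J_def\<close>)
    hence Gj: "height d u B < height d u (B - j)" using j1 jJ QJ by (auto simp: drops_to_def)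
    have Bd: "d \<le> B" by (simp add: B_def)
    have "drops_to d u (B - j) (J - j)"
      unfolding drops_to_def
    proof (intro conjI)
      show "1 \<le> J - j" using jJ by simp
      show "J - j \<le> d" using QJ by simp
      have "B - j - (J - j) = B - J" using jJ QJ Bd by simp
      thus "height d u (B - j - (J - j)) \<le> height d u (B - j)" using QJ(1) Gj by (simp add: drops_to_def)
    qed
    hence ex2: "\<exists>i. drops_to d u (B - j) i" by blast
    have "(LEAST i. drops_to d u (B - j) i) \<le> J - j" using \<open>drops_to d u (B - j) (J - j)\<close> by (rule Least_le)
    hence "back_run n d u (B - j) \<le> J - j - 1" using ex2 by (simp add: back_run_def)
    thus "zero_decode n d u ! ((b - j) mod d) + j \<le> zero_decode n d u ! (b mod d)"
      using RBj RB RBJ jJ by simp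
  qed
  thus ?thesis using ent by (simp add: admissible_def)
qed

lemma back_run_eq_0_iff:
  assumes u: "length u = d" and d: "1 \<le> d" "d \<le> n" and k: "k < d"
  shows "back_run n d u (k + d) = 0 \<longleftrightarrow> 1 \<le> u!k"
proof -
  define K where "K = k + d"
  have KS: "K = Suc (K - 1)" using d by (simp add: K_def)
  have Km: "K mod d = k" using k by (simp add: K_def)
  have GK: "height d u K = height d u (K - 1) + int (u!k) - 1"
    using height_Suc[of d u "K - 1"] KS Km by simp
  have Q1: "drops_to d u K 1 \<longleftrightarrow> 1 \<le> u!k" using GK d by (auto simp: drops_to_def)
  show ?thesis
  proof
    assume R0: "back_run n d u (k + d) = 0"
    hence ex: "\<exists>j. drops_to d u K j" using d by (auto simp: back_run_def K_def split: if_splits)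
    hence "(LEAST j. drops_to d u K j) = 1" using R0 Least_drops_to(2)[OF ex] by (simp add: back_run_def K_def)
    hence "drops_to d u K 1" using Least_drops_to(1)[OF ex] by simp
    thus "1 \<le> u!k" using Q1 by simp
  next
    assume "1 \<le> u!k"
    hence q: "drops_to d u K 1" using Q1 by simp
    hence "(LEAST j. drops_to d u K j) \<le> 1" by (rule Least_le)
    thus "back_run n d u (k + d) = 0" using q by (auto simp: back_run_def K_def)
  qed
qed

lemma back_run_eq_iff:
  assumes u: "length u = d" and d: "1 \<le> d" "d \<le> n" and K: "1 \<le> K" and t: "1 \<le> t" "t < d"
  shows "back_run n d u (K + t) = t \<longleftrightarrow>
     (height d u (K - 1) \<le> height d u (K + t) \<and> (\<forall>m. K \<le> m \<and> m < K + t \<longrightarrow> height d u (K + t) < height d u m))"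
proof
  assume R: "back_run n d u (K + t) = t"
  have ex: "\<exists>j. drops_to d u (K + t) j" using R t d by (auto simp: back_run_def split: if_splits)
  have L: "(LEAST j. drops_to d u (K + t) j) = t + 1" using R ex Least_drops_to(2)[OF ex] by (simp add: back_run_def)
  have "drops_to d u (K + t) (t + 1)" using Least_drops_to(1)[OF ex] L by simp
  hence g1: "height d u (K - 1) \<le> height d u (K + t)" using K by (simp add: drops_to_def)
  have "height d u (K + t) < height d u m" if "K \<le> m" "m < K + t" for m
  proof -
    define j where "j = K + t - m"
    have "j < (LEAST j. drops_to d u (K + t) j)" using L that by (simp add: j_def)
    hence "\<not> drops_to d u (K + t) j" by (rule not_less_Least)
    moreover have "1 \<le> j" "j \<le> d" using that t by (auto simp: j_def)
    moreover have "K + t - j = m" using that by (simp add: j_def)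
    ultimately show ?thesis by (auto simp: drops_to_def)
  qed
  thus "height d u (K - 1) \<le> height d u (K + t) \<and> (\<forall>m. K \<le> m \<and> m < K + t \<longrightarrow> height d u (K + t) < height d u m)"
    using g1 by blast
next
  assume H: "height d u (K - 1) \<le> height d u (K + t) \<and> (\<forall>m. K \<le> m \<and> m < K + t \<longrightarrow> height d u (K + t) < height d u m)"
  have q: "drops_to d u (K + t) (t + 1)" using H t K by (simp add: drops_to_def)
  have "(LEAST j. drops_to d u (K + t) j) = t + 1"
  proof (rule Least_equality[where P="drops_to d u (K + t)", OF q])
    fix y assume y: "drops_to d u (K + t) y"
    show "t + 1 \<le> y"
    proof (rule ccontr)
      assume "\<not> t + 1 \<le> y"
      hence "y \<le> t" by simp
      moreover have "1 \<le> y" using y by (simp add: drops_to_def)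
      ultimately have "height d u (K + t) < height d u (K + t - y)" using H by auto
      thus False using y by (simp add: drops_to_def)
    qed
  qed
  thus "back_run n d u (K + t) = t" using q by (auto simp: back_run_def)
qed

text \<open>The \<open>t\<close> counted below are the first visits, after time \<open>K\<close>, of the path to the levels
  \<open>height (K - 1), \<dots>, height K - 1\<close>.\<close>
lemma card_back_run_hits:
  assumes u: "length u = d" "sum_list u \<le> d" and d: "1 \<le> d" and K: "1 \<le> K"
    and uk: "1 \<le> u!(K mod d)"
  shows "card {t\<in>{1..<d}. height d u (K - 1) \<le> height d u (K + t) \<and>
           (\<forall>m. K \<le> m \<and> m < K + t \<longrightarrow> height d u (K + t) < height d u m)} = u!(K mod d) - 1"
    (is "card ?T = _")
proof -
  let ?G = "height d u"
  have GK: "?G K = ?G (K - 1) + int (u!(K mod d)) - 1"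
    using height_Suc[of d u "K - 1"] K by simp
  have first_visit: "?G (K + t) < ?G m" if "t \<in> ?T" "K \<le> m" "m < K + t" for t m
    using that by simp
  have "bij_betw (\<lambda>t. ?G (K + t)) ?T {?G (K - 1)..<?G K}"
  proof (rule bij_betw_imageI)
    show "inj_on (\<lambda>t. ?G (K + t)) ?T"
    proof (rule inj_onI, rule ccontr)
      fix t t' assume tt: "t \<in> ?T" "t' \<in> ?T" "?G (K + t) = ?G (K + t')" "t \<noteq> t'"
      thus False using first_visit[OF tt(1), of "K + t'"] first_visit[OF tt(2), of "K + t"]
        by (cases "t < t'") auto
    qed
    show "(\<lambda>t. ?G (K + t)) ` ?T = {?G (K - 1)..<?G K}"
    proof
      show "(\<lambda>t. ?G (K + t)) ` ?T \<subseteq> {?G (K - 1)..<?G K}"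
      proof (rule image_subsetI)
        fix t assume t: "t \<in> ?T"
        hence "?G (K + t) < ?G K" using first_visit[OF t, of K] by simp
        thus "?G (K + t) \<in> {?G (K - 1)..<?G K}" using t by simp
      qed
      show "{?G (K - 1)..<?G K} \<subseteq> (\<lambda>t. ?G (K + t)) ` ?T"
      proof
        fix v assume v: "v \<in> {?G (K - 1)..<?G K}"
        have "?G (K + (d - 1)) \<le> v"
          using height_add_period[OF u(1) d, of "K - 1"] u(2) v K d by simp
        then obtain t where "1 \<le> t" "t \<le> d - 1" "?G (K + t) = v"
          "\<forall>m. K \<le> m \<and> m < K + t \<longrightarrow> v < ?G m"
          using skip_free_first_hit[of ?G K "d - 1" v] height_Suc_ge v by auto
        hence "t \<in> ?T" using v d by auto
        thus "v \<in> (\<lambda>t. ?G (K + t)) ` ?T" using \<open>?G (K + t) = v\<close> by (rule rev_image_eqI[OF _ sym])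
      qed
    qed
  qed
  hence "card ?T = card {?G (K - 1)..<?G K}" by (rule bij_betw_same_card)
  thus ?thesis using GK uk by simp
qed

lemma zero_code_zero_decode:
  assumes u: "length u = d" "sum_list u \<le> d" and d: "1 \<le> d" "d \<le> n"
  shows "zero_code d (zero_decode n d u) = u"
proof (rule nth_equalityI)
  show "length (zero_code d (zero_decode n d u)) = length u" using u by simp
  fix k assume "k < length (zero_code d (zero_decode n d u))"
  hence k: "k < d" by simp
  have pk: "zero_decode n d u ! k = back_run n d u (k + d)" using zero_decode_nth[OF u(1) d(1), where x=k and n=n] k by simp
  have pkt: "zero_decode n d u ! ((k + t) mod d) = back_run n d u ((k + d) + t)" for t
    using zero_decode_nth[OF u(1) d(1), where x="k + t" and n=n] by (simp add: add.commute add.left_commute)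
  show "zero_code d (zero_decode n d u) ! k = u ! k"
  proof (cases "1 \<le> u!k")
    case False
    thus ?thesis using k pk back_run_eq_0_iff[OF u(1) d k] by (simp add: zero_code_nth)
  next
    case True
    have Km: "(k + d) mod d = k" using k by simp
    have "{t\<in>{1..<d}. zero_decode n d u ! ((k + t) mod d) = t} =
          {t\<in>{1..<d}. height d u (k + d - 1) \<le> height d u (k + d + t) \<and>
           (\<forall>m. k + d \<le> m \<and> m < k + d + t \<longrightarrow> height d u (k + d + t) < height d u m)}"
      using back_run_eq_iff[OF u(1) d, of "k + d"] d by (auto simp: pkt)
    moreover have "card \<dots> = u!k - 1"
      using card_back_run_hits[OF u d(1), of "k + d"] d True Km by simp
    ultimately show ?thesis using k pk back_run_eq_0_iff[OF u(1) d k] True by (simp add: zero_code_nth)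
  qed
qed

lemma card_admissible_eq_bounded_sum_lists:
  assumes d: "1 \<le> d" "d \<le> n"
  shows "card (admissible n d) = card (bounded_sum_lists d)"
proof -
  have "zero_code d ` admissible n d = bounded_sum_lists d"
  proof
    show "zero_code d ` admissible n d \<subseteq> bounded_sum_lists d" using zero_code_in_bounded_sum_lists d by blast
    show "bounded_sum_lists d \<subseteq> zero_code d ` admissible n d"
    proof
      fix u assume "u \<in> bounded_sum_lists d"
      hence u: "length u = d" "sum_list u \<le> d" by (auto simp: bounded_sum_lists_def)
      have "u = zero_code d (zero_decode n d u)" using zero_code_zero_decode[OF u d] by simp
      thus "u \<in> zero_code d ` admissible n d" using zero_decode_admissible[OF u(1) d] by blast
    qed
  qed
  thus ?thesis using card_image[OF inj_on_zero_code[OF d]] by simp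
qed

lemma closed_walksD:
  assumes "es \<in> closed_walks n d"
  shows "length es = d" "set es \<subseteq> Av312 (n + 1)"
    "\<And>i. i + 1 < d \<Longrightarrow> edge_head (es ! i) = edge_tail (es ! (i + 1))"
    "edge_head (es ! (d - 1)) = edge_tail (es ! 0)"
  using assms by (auto simp: closed_walks_def)

lemma closed_walk_edge:
  assumes "es \<in> closed_walks n d" "1 \<le> d"
  shows "es ! (t mod d) \<in> perms (n+1)" "avoids312 (es ! (t mod d))"
proof -
  have "t mod d < length es" using closed_walksD(1)[OF assms(1)] assms(2) by simp
  hence "es ! (t mod d) \<in> Av312 (n+1)" using closed_walksD(2)[OF assms(1)] nth_mem by blast
  thus "es ! (t mod d) \<in> perms (n+1)" "avoids312 (es ! (t mod d))" by (auto simp: Av312_def)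
qed

lemma closed_walk_link:
  assumes "es \<in> closed_walks n d" "1 \<le> d"
  shows "edge_head (es ! (t mod d)) = edge_tail (es ! (Suc t mod d))"
proof (cases "Suc (t mod d) < d")
  case True
  hence "Suc t mod d = t mod d + 1" by (simp add: mod_Suc)
  thus ?thesis using closed_walksD(3)[OF assms(1), of "t mod d"] True by simp
next
  case False
  hence e: "t mod d = d - 1" using mod_less_divisor[of d t] assms(2) by linarith
  hence "Suc t mod d = 0" using assms(2) by (simp add: mod_Suc)
  thus ?thesis using closed_walksD(4)[OF assms(1)] e by simp
qed

lemma closed_walk_shift_Suc:
  assumes "es \<in> closed_walks n d" "1 \<le> d" "p < n" "q < n"
  shows "es!(t mod d)!(Suc p) < es!(t mod d)!(Suc q) \<longleftrightarrow> es!(Suc t mod d)!p < es!(Suc t mod d)!q"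
proof -
  let ?A = "es!(t mod d)" and ?B = "es!(Suc t mod d)"
  have A: "length ?A = n + 1" "distinct ?A" using permsD[OF closed_walk_edge(1)[OF assms(1,2)]] by auto
  have B: "length ?B = n + 1" "distinct ?B" using permsD[OF closed_walk_edge(1)[OF assms(1,2)]] by auto
  have dA: "distinct (tl ?A)" using A by (simp add: distinct_tl)
  have dB: "distinct (butlast ?B)" using B by (simp add: distinct_butlast)
  have "?A!(Suc p) < ?A!(Suc q) \<longleftrightarrow> tl ?A ! p < tl ?A ! q" using A assms by (simp add: nth_tl)
  also have "\<dots> \<longleftrightarrow> standardize (tl ?A) ! p < standardize (tl ?A) ! q"
    using standardize_less_iff[OF dA] A assms by simp
  also have "standardize (tl ?A) = standardize (butlast ?B)"
    using closed_walk_link[OF assms(1,2), of t] by (simp add: edge_head_def edge_tail_def)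
  also have "standardize (butlast ?B) ! p < standardize (butlast ?B) ! q \<longleftrightarrow> butlast ?B ! p < butlast ?B ! q"
    using standardize_less_iff[OF dB] B assms by simp
  also have "\<dots> \<longleftrightarrow> ?B ! p < ?B ! q" using B assms by (simp add: nth_butlast)
  finally show ?thesis .
qed

lemma closed_walk_shift:
  assumes "es \<in> closed_walks n d" "1 \<le> d" "p + k \<le> n" "q + k \<le> n"
  shows "es!(t mod d)!(p + k) < es!(t mod d)!(q + k) \<longleftrightarrow> es!((t + k) mod d)!p < es!((t + k) mod d)!q"
  using assms(3,4)
proof (induction k arbitrary: t)
  case 0 thus ?case by simp
next
  case (Suc k)
  have "es!(t mod d)!(p + Suc k) < es!(t mod d)!(q + Suc k) \<longleftrightarrow>
        es!(Suc t mod d)!(p + k) < es!(Suc t mod d)!(q + k)"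
    using closed_walk_shift_Suc[OF assms(1,2), of "p + k" "q + k" t] Suc.prems by simp
  also have "\<dots> \<longleftrightarrow> es!((Suc t + k) mod d)!p < es!((Suc t + k) mod d)!q"
    using Suc.IH[of "Suc t"] Suc.prems by simp
  finally show ?case by simp
qed

text \<open>In the window \<open>es ! ((b - j) mod d)\<close>, which starts at position \<open>b - j\<close>, position \<open>b\<close> has index
  \<open>j\<close>. This is meaningful only for \<open>n \<le> b\<close>, hence the shift by \<open>d * n\<close> in \<open>walk_code\<close>.\<close>
definition back_inversions :: "nat list list \<Rightarrow> nat \<Rightarrow> nat \<Rightarrow> nat \<Rightarrow> nat" where
  "back_inversions es n d b = card {j\<in>{1..n}. es!((b-j) mod d)!j < es!((b-j) mod d)!0}"

definition walk_code :: "nat \<Rightarrow> nat \<Rightarrow> nat list list \<Rightarrow> nat list" where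
  "walk_code n d es = map (\<lambda>l. back_inversions es n d (l + d*n)) [0..<d]"

lemma back_inversions_add_period:
  assumes "n \<le> b"
  shows "back_inversions es n d (b + d) = back_inversions es n d b"
proof -
  have "{j\<in>{1..n}. es!((b + d - j) mod d)!j < es!((b + d - j) mod d)!0} =
        {j\<in>{1..n}. es!((b-j) mod d)!j < es!((b-j) mod d)!0}"
  proof (rule Collect_cong)
    fix j
    show "(j \<in> {1..n} \<and> es!((b + d - j) mod d)!j < es!((b + d - j) mod d)!0) =
          (j \<in> {1..n} \<and> es!((b-j) mod d)!j < es!((b-j) mod d)!0)"
    proof (cases "j \<in> {1..n}")
      case True
      hence "b + d - j = (b - j) + d" using assms by simp
      thus ?thesis by simp
    qed auto
  qed
  thus ?thesis by (simp add: back_inversions_def)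
qed

lemma back_inversions_add_mult_period:
  assumes "n \<le> b"
  shows "back_inversions es n d (b + d * k) = back_inversions es n d b"
proof (induction k)
  case (Suc k)
  have "back_inversions es n d (b + d * Suc k) = back_inversions es n d ((b + d * k) + d)" by (simp add: algebra_simps)
  also have "\<dots> = back_inversions es n d (b + d * k)" by (rule back_inversions_add_period) (use assms in simp)
  finally show ?case using Suc by simp
qed simp

lemma walk_code_nth:
  assumes "1 \<le> d" "n \<le> b"
  shows "walk_code n d es ! (b mod d) = back_inversions es n d b"
proof -
  have "walk_code n d es ! (b mod d) = back_inversions es n d (b mod d + d * n)"
    using assms by (simp add: walk_code_def mult.commute)
  also have "\<dots> = back_inversions es n d ((b mod d + d * n) + d * (b div d))"
    by (rule back_inversions_add_mult_period[symmetric]) (use mult_le_mono1[OF assms(1), of n] in linarith)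
  also have "(b mod d + d * n) + d * (b div d) = b + d * n" by simp
  also have "back_inversions es n d (b + d * n) = back_inversions es n d b" by (rule back_inversions_add_mult_period) (use assms in simp)
  finally show ?thesis .
qed

lemma walk_code_nth_shift:
  assumes "1 \<le> d"
  shows "walk_code n d es ! (b mod d) = back_inversions es n d (b + d * n)"
proof -
  have "walk_code n d es ! ((b + d*n) mod d) = back_inversions es n d (b + d * n)"
    by (rule walk_code_nth[OF assms]) (use mult_le_mono1[OF assms(1), of n] in linarith)
  thus ?thesis by simp
qed

lemma closed_walk_entries_distinct:
  assumes "es \<in> closed_walks n d" "1 \<le> d" "i \<le> n" "j \<le> n" "i \<noteq> j"
  shows "es!(t mod d)!i \<noteq> es!(t mod d)!j"
  using permsD[OF closed_walk_edge(1)[OF assms(1,2), of t]] assms(3-5) by (simp add: nth_eq_iff_index_eq)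

lemma back_inversions_set_eq:
  assumes cw: "es \<in> closed_walks n d" and d: "1 \<le> d" and b: "n \<le> b"
  shows "{j\<in>{1..n}. es!((b-j) mod d)!j < es!((b-j) mod d)!0} = {1..back_inversions es n d b}"
  unfolding back_inversions_def
proof (rule down_closed_eq_atLeastAtMost)
  show "{j\<in>{1..n}. es!((b-j) mod d)!j < es!((b-j) mod d)!0} \<subseteq> {1..n}" by auto
  fix j j'
  assume jS: "j \<in> {j\<in>{1..n}. es!((b-j) mod d)!j < es!((b-j) mod d)!0}" and j1: "1 \<le> j'" and jj: "j' < j"
  let ?W = "es!((b-j) mod d)"
  have jn: "1 \<le> j" "j \<le> n" and Wj: "?W!j < ?W!0" using jS by auto
  have e1: "(b - j) + (j - j') = b - j'" using jj jn b by simp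
  have sh: "?W!(j' + (j - j')) < ?W!(0 + (j - j')) \<longleftrightarrow>
            es!((b - j + (j - j')) mod d)!j' < es!((b - j + (j - j')) mod d)!0"
    by (rule closed_walk_shift[OF cw d(1)]) (use jj jn in auto)
  have "\<not> ?W!(j - j') < ?W!j"
  proof
    assume a: "?W!(j - j') < ?W!j"
    have "avoids312 ?W" by (rule closed_walk_edge(2)[OF cw d(1)])
    moreover have "length ?W = n + 1" using permsD[OF closed_walk_edge(1)[OF cw d(1)]] by simp
    moreover have "\<exists>i j k. i < j \<and> j < k \<and> k < length ?W \<and> ?W!j < ?W!k \<and> ?W!k < ?W!i"
      by (intro exI[of _ 0] exI[of _ "j - j'"] exI[of _ j]) (use a Wj jj j1 jn \<open>length ?W = n + 1\<close> in auto)
    ultimately show False unfolding avoids312_def by blast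
  qed
  moreover have "?W!(j - j') \<noteq> ?W!j" by (rule closed_walk_entries_distinct[OF cw d(1)]) (use jj jn j1 in auto)
  ultimately have "?W!j < ?W!(j - j')" by simp
  hence "es!((b - j') mod d)!j' < es!((b - j') mod d)!0" using sh e1 jj by simp
  thus "j' \<in> {j\<in>{1..n}. es!((b-j) mod d)!j < es!((b-j) mod d)!0}" using j1 jj jn by simp
qed

lemma closed_walk_less_iff:
  assumes cw: "es \<in> closed_walks n d" and d: "1 \<le> d" and pq: "p < q" "q \<le> n"
  shows "es!(t mod d)!q < es!(t mod d)!p \<longleftrightarrow> q - p \<le> walk_code n d es ! ((t + q) mod d)"
proof -
  have "es!(t mod d)!((q - p) + p) < es!(t mod d)!(0 + p) \<longleftrightarrow>
        es!((t + p) mod d)!(q - p) < es!((t + p) mod d)!0"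
    by (rule closed_walk_shift[OF cw d(1)]) (use pq in auto)
  hence s1: "es!(t mod d)!q < es!(t mod d)!p \<longleftrightarrow> es!((t + p) mod d)!(q - p) < es!((t + p) mod d)!0"
    using pq by simp
  define b where "b = t + q + d * n"
  have bn: "n \<le> b" using mult_le_mono1[OF d(1), of n] unfolding b_def by linarith
  have bj: "b - (q - p) = (t + p) + d * n" using pq by (simp add: b_def)
  have md: "(b - (q - p)) mod d = (t + p) mod d" unfolding bj by simp
  have m1: "(q - p) \<in> {j\<in>{1..n}. es!((b-j) mod d)!j < es!((b-j) mod d)!0} \<longleftrightarrow>
        es!((t + p) mod d)!(q - p) < es!((t + p) mod d)!0"
    using pq md by auto
  have m2: "(q - p) \<in> {1..back_inversions es n d b} \<longleftrightarrow> q - p \<le> back_inversions es n d b" using pq by auto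
  have m3: "back_inversions es n d b = walk_code n d es ! ((t + q) mod d)"
    using walk_code_nth_shift[OF d(1), of n es "t + q"] by (simp add: b_def)
  have m4: "(q - p) \<in> {j\<in>{1..n}. es!((b-j) mod d)!j < es!((b-j) mod d)!0} \<longleftrightarrow>
            (q - p) \<in> {1..back_inversions es n d b}"
    by (simp only: back_inversions_set_eq[OF cw d(1) bn])
  show ?thesis using s1 m1 m2 m3 m4 by simp
qed

lemma back_inversions_le: "back_inversions es n d b \<le> n"
proof -
  have "back_inversions es n d b \<le> card {1..n}" unfolding back_inversions_def by (rule card_mono) auto
  thus ?thesis by simp
qed

lemma walk_code_admissible:
  assumes cw: "es \<in> closed_walks n d" and d: "1 \<le> d"
  shows "walk_code n d es \<in> admissible n d"
proof -
  have len: "length (walk_code n d es) = d" by (simp add: walk_code_def)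
  have ent: "\<forall>x\<in>set (walk_code n d es). x \<le> n" using back_inversions_le by (auto simp: walk_code_def)
  have "back_consistent n d (walk_code n d es)"
    unfolding back_consistent_def
  proof (intro allI impI)
    fix b j
    assume j1: "1 \<le> j" and jr: "j \<le> walk_code n d es ! (b mod d)" and rn: "walk_code n d es ! (b mod d) < n"
      and jb: "j \<le> b"
    define r where "r = walk_code n d es ! (b mod d)"
    define B where "B = b + d * n"
    have rB: "r + 1 \<le> B" using rn mult_le_mono1[OF d(1), of n] unfolding r_def B_def by linarith
    define t0 where "t0 = B - (r + 1)"
    define i where "i = r + 1 - j"
    have jr': "j \<le> r" using jr by (simp add: r_def)
    have rn': "r < n" using rn by (simp add: r_def)
    show "walk_code n d es ! ((b - j) mod d) + j \<le> walk_code n d es ! (b mod d)"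
    proof (rule ccontr)
      assume "\<not> walk_code n d es ! ((b - j) mod d) + j \<le> walk_code n d es ! (b mod d)"
      hence ci: "i \<le> walk_code n d es ! ((b - j) mod d)" by (simp add: i_def r_def)
      have "t0 + (r + 1) = b + d * n" using rB unfolding t0_def B_def by linarith
      hence e1: "(t0 + (r + 1)) mod d = b mod d" by simp
      have e2: "(t0 + i) mod d = (b - j) mod d"
      proof -
        have "t0 + i = (b - j) + d * n" using rB jr' jb by (simp add: t0_def i_def B_def)
        thus ?thesis by simp
      qed
      have "es!(t0 mod d)!(r + 1) < es!(t0 mod d)!i \<longleftrightarrow> (r + 1) - i \<le> walk_code n d es ! ((t0 + (r + 1)) mod d)"
        by (rule closed_walk_less_iff[OF cw d(1)]) (use j1 jr' rn' in \<open>auto simp: i_def\<close>)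
      hence s1: "es!(t0 mod d)!(r + 1) < es!(t0 mod d)!i" using e1 jr' j1 by (simp add: i_def r_def)
      have "es!(t0 mod d)!i < es!(t0 mod d)!0 \<longleftrightarrow> i - 0 \<le> walk_code n d es ! ((t0 + i) mod d)"
        by (rule closed_walk_less_iff[OF cw d(1)]) (use j1 jr' rn' in \<open>auto simp: i_def\<close>)
      hence s2: "es!(t0 mod d)!i < es!(t0 mod d)!0" using e2 ci by simp
      have "es!(t0 mod d)!(r + 1) < es!(t0 mod d)!0 \<longleftrightarrow> (r + 1) - 0 \<le> walk_code n d es ! ((t0 + (r + 1)) mod d)"
        by (rule closed_walk_less_iff[OF cw d(1)]) (use rn' in auto)
      hence "\<not> es!(t0 mod d)!(r + 1) < es!(t0 mod d)!0" using e1 by (simp add: r_def)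
      thus False using s1 s2 by simp
    qed
  qed
  thus ?thesis using len ent by (simp add: admissible_def)
qed

lemma inj_on_walk_code:
  assumes d: "1 \<le> d"
  shows "inj_on (walk_code n d) (closed_walks n d)"
proof (rule inj_onI)
  fix es es' assume cw: "es \<in> closed_walks n d" and cw': "es' \<in> closed_walks n d"
    and eq: "walk_code n d es = walk_code n d es'"
  show "es = es'"
  proof (rule nth_equalityI)
    show "length es = length es'" using closed_walksD(1)[OF cw] closed_walksD(1)[OF cw'] by simp
    fix a assume "a < length es"
    hence a: "a < d" using closed_walksD(1)[OF cw] by simp
    hence am: "a mod d = a" by simp
    have P: "es!a \<in> perms (n+1)" "es'!a \<in> perms (n+1)"
      using closed_walk_edge(1)[OF cw d(1), of a] closed_walk_edge(1)[OF cw' d(1), of a] am by auto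
    show "es!a = es'!a"
    proof (rule perms_eq_if_same_order[OF P])
      fix i j assume ij: "i < n + 1" "j < n + 1"
      show "es!a!i < es!a!j \<longleftrightarrow> es'!a!i < es'!a!j"
      proof (rule linorder_cases[of i j])
        assume lt: "i < j"
        have k1: "es!(a mod d)!j < es!(a mod d)!i \<longleftrightarrow> j - i \<le> walk_code n d es ! ((a + j) mod d)"
          by (rule closed_walk_less_iff[OF cw d(1)]) (use lt ij in auto)
        have k2: "es'!(a mod d)!j < es'!(a mod d)!i \<longleftrightarrow> j - i \<le> walk_code n d es' ! ((a + j) mod d)"
          by (rule closed_walk_less_iff[OF cw' d(1)]) (use lt ij in auto)
        have n1: "es!(a mod d)!i \<noteq> es!(a mod d)!j" by (rule closed_walk_entries_distinct[OF cw d(1)]) (use lt ij in auto)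
        have n2: "es'!(a mod d)!i \<noteq> es'!(a mod d)!j" by (rule closed_walk_entries_distinct[OF cw' d(1)]) (use lt ij in auto)
        show ?thesis using k1 k2 n1 n2 eq am by (auto simp: not_less_iff_gr_or_eq)
      next
        assume "i = j" thus ?thesis by simp
      next
        assume lt: "j < i"
        have k1: "es!(a mod d)!i < es!(a mod d)!j \<longleftrightarrow> i - j \<le> walk_code n d es ! ((a + i) mod d)"
          by (rule closed_walk_less_iff[OF cw d(1)]) (use lt ij in auto)
        have k2: "es'!(a mod d)!i < es'!(a mod d)!j \<longleftrightarrow> i - j \<le> walk_code n d es' ! ((a + i) mod d)"
          by (rule closed_walk_less_iff[OF cw' d(1)]) (use lt ij in auto)
        show ?thesis using k1 k2 eq am by simp
      qed
    qed
  qed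
qed

text \<open>The order on positions prescribed by a code: \<open>y\<close> lies below an earlier \<open>x\<close> iff \<open>y - x \<le> r(y)\<close>.
  For admissible codes it is transitive on every window of \<open>n + 1\<close> consecutive positions, which is all
  that is needed.\<close>
definition pos_less :: "nat \<Rightarrow> nat list \<Rightarrow> nat \<Rightarrow> nat \<Rightarrow> bool" where
  "pos_less d rs x y \<longleftrightarrow> (x < y \<and> \<not> (y - x \<le> rs!(y mod d))) \<or> (y < x \<and> x - y \<le> rs!(x mod d))"

definition pos_rank :: "nat \<Rightarrow> nat \<Rightarrow> nat list \<Rightarrow> nat \<Rightarrow> nat \<Rightarrow> nat" where
  "pos_rank n d rs a p = Suc (card {q. q \<le> n \<and> pos_less d rs (a + q) (a + p)})"

definition window :: "nat \<Rightarrow> nat \<Rightarrow> nat list \<Rightarrow> nat \<Rightarrow> nat list" where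
  "window n d rs a = map (pos_rank n d rs a) [0..<Suc n]"

definition walk_of_code :: "nat \<Rightarrow> nat \<Rightarrow> nat list \<Rightarrow> nat list list" where
  "walk_of_code n d rs = map (window n d rs) [0..<d]"

lemma pos_less_irrefl: "\<not> pos_less d rs x x" by (simp add: pos_less_def)

lemma pos_less_asym: "pos_less d rs x y \<Longrightarrow> \<not> pos_less d rs y x" by (auto simp: pos_less_def)

lemma pos_less_total: "x \<noteq> y \<Longrightarrow> pos_less d rs x y \<or> pos_less d rs y x"
  by (auto simp: pos_less_def)

lemma pos_less_add_period: "pos_less d rs (x + d) (y + d) = pos_less d rs x y"
  by (simp add: pos_less_def)

lemma pos_less_no_cycle_increasing:
  assumes "i < m" "m < l"
  shows "\<not> (pos_less d rs i m \<and> pos_less d rs m l \<and> pos_less d rs l i)"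
  using assms by (auto simp: pos_less_def)

lemma pos_less_no_cycle_decreasing:
  assumes rs: "rs \<in> admissible n d" and d: "1 \<le> d" and "i < m" "m < l" "l - i \<le> n"
  shows "\<not> (pos_less d rs i l \<and> pos_less d rs l m \<and> pos_less d rs m i)"
proof
  assume H: "pos_less d rs i l \<and> pos_less d rs l m \<and> pos_less d rs m i"
  have h1: "m - i \<le> rs!(m mod d)" using H assms by (auto simp: pos_less_def)
  have h2: "l - m \<le> rs!(l mod d)" using H assms by (auto simp: pos_less_def)
  have h3: "rs!(l mod d) < l - i" using H assms by (auto simp: pos_less_def)
  have "rs!((l - (l - m)) mod d) + (l - m) \<le> rs!(l mod d)"
    by (rule back_consistentD[OF admissibleD(3)[OF rs d]]) (use assms h2 h3 in auto)
  hence "rs!(m mod d) + (l - m) \<le> rs!(l mod d)" using assms by simp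
  thus False using h1 h3 assms by simp
qed

lemma pos_less_no_3cycle:
  assumes rs: "rs \<in> admissible n d" and d: "1 \<le> d"
    and w: "a \<le> x" "x \<le> a + n" "a \<le> y" "y \<le> a + n" "a \<le> z" "z \<le> a + n"
    and dist: "x \<noteq> y" "y \<noteq> z" "x \<noteq> z"
    and c: "pos_less d rs x y" "pos_less d rs y z" "pos_less d rs z x"
  shows False
proof -
  have no_cycle_from_least: "\<not> (pos_less d rs i j \<and> pos_less d rs j k \<and> pos_less d rs k i)"
    if "i < j" "i < k" "j \<noteq> k" "a \<le> i" "j \<le> a + n" "k \<le> a + n" for i j k
  proof (cases "j < k")
    case True
    thus ?thesis using pos_less_no_cycle_increasing[of i j k] that by blast
  next
    case False
    thus ?thesis using pos_less_no_cycle_decreasing[OF rs d, of i k j] that by auto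
  qed
  consider "x < y" "x < z" | "y < x" "y < z" | "z < x" "z < y" using dist by linarith
  thus False
    using no_cycle_from_least[of x y z] no_cycle_from_least[of y z x] no_cycle_from_least[of z x y]
      c w dist by cases auto
qed

lemma pos_less_trans:
  assumes rs: "rs \<in> admissible n d" and d: "1 \<le> d"
    and w: "a \<le> x" "x \<le> a + n" "a \<le> y" "y \<le> a + n" "a \<le> z" "z \<le> a + n"
    and c: "pos_less d rs x y" "pos_less d rs y z"
  shows "pos_less d rs x z"
proof -
  have xy: "x \<noteq> y" using c pos_less_irrefl by metis
  have yz: "y \<noteq> z" using c pos_less_irrefl by metis
  have xz: "x \<noteq> z" using c pos_less_asym by metis
  show ?thesis
  proof (rule ccontr)
    assume "\<not> pos_less d rs x z"
    hence "pos_less d rs z x" using pos_less_total xz by blast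
    thus False using pos_less_no_3cycle[OF rs d w xy yz xz c] by blast
  qed
qed

lemma pos_rank_strict_mono:
  assumes rs: "rs \<in> admissible n d" and d: "1 \<le> d" and pq: "p \<le> n" "q \<le> n"
    and l: "pos_less d rs (a + p) (a + q)"
  shows "pos_rank n d rs a p < pos_rank n d rs a q"
proof -
  have sub: "{q'. q' \<le> n \<and> pos_less d rs (a + q') (a + p)} \<subseteq> {q'. q' \<le> n \<and> pos_less d rs (a + q') (a + q)}"
  proof
    fix x assume "x \<in> {q'. q' \<le> n \<and> pos_less d rs (a + q') (a + p)}"
    hence x: "x \<le> n" "pos_less d rs (a + x) (a + p)" by auto
    have "pos_less d rs (a + x) (a + q)" by (rule pos_less_trans[OF rs d, where a=a, OF _ _ _ _ _ _ x(2) l]) (use x pq in auto)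
    thus "x \<in> {q'. q' \<le> n \<and> pos_less d rs (a + q') (a + q)}" using x by simp
  qed
  have "p \<in> {q'. q' \<le> n \<and> pos_less d rs (a + q') (a + q)}" using pq l by simp
  moreover have "p \<notin> {q'. q' \<le> n \<and> pos_less d rs (a + q') (a + p)}" using pos_less_irrefl by simp
  ultimately have "{q'. q' \<le> n \<and> pos_less d rs (a + q') (a + p)} \<subset> {q'. q' \<le> n \<and> pos_less d rs (a + q') (a + q)}"
    using sub by blast
  hence "card {q'. q' \<le> n \<and> pos_less d rs (a + q') (a + p)} < card {q'. q' \<le> n \<and> pos_less d rs (a + q') (a + q)}"
    by (rule psubset_card_mono[rotated]) simp
  thus ?thesis by (simp add: pos_rank_def)
qed

lemma pos_rank_less_iff:
  assumes rs: "rs \<in> admissible n d" and d: "1 \<le> d" and pq: "p \<le> n" "q \<le> n"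
  shows "pos_rank n d rs a p < pos_rank n d rs a q \<longleftrightarrow> pos_less d rs (a + p) (a + q)"
proof
  assume l: "pos_rank n d rs a p < pos_rank n d rs a q"
  show "pos_less d rs (a + p) (a + q)"
  proof (rule ccontr)
    assume nl: "\<not> pos_less d rs (a + p) (a + q)"
    show False
    proof (cases "p = q")
      case True thus False using l by simp
    next
      case False
      hence "pos_less d rs (a + q) (a + p)" using pos_less_total[of "a + p" "a + q" d rs] nl by simp
      hence "pos_rank n d rs a q < pos_rank n d rs a p" by (rule pos_rank_strict_mono[OF rs d pq(2,1)])
      thus False using l by simp
    qed
  qed
qed (rule pos_rank_strict_mono[OF rs d pq])

lemma pos_rank_bounds: "1 \<le> pos_rank n d rs a p \<and> (p \<le> n \<longrightarrow> pos_rank n d rs a p \<le> n + 1)"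
proof -
  have "p \<le> n \<Longrightarrow> card {q. q \<le> n \<and> pos_less d rs (a + q) (a + p)} \<le> n"
  proof -
    assume p: "p \<le> n"
    have "{q. q \<le> n \<and> pos_less d rs (a + q) (a + p)} \<subseteq> {..n} - {p}" using pos_less_irrefl by auto
    hence "card {q. q \<le> n \<and> pos_less d rs (a + q) (a + p)} \<le> card ({..n} - {p})"
      by (rule card_mono[rotated]) simp
    thus ?thesis using p by simp
  qed
  thus ?thesis by (simp add: pos_rank_def)
qed

lemma length_window[simp]: "length (window n d rs a) = Suc n" by (simp add: window_def)

lemma window_nth: "p < Suc n \<Longrightarrow> window n d rs a ! p = pos_rank n d rs a p"
  by (simp add: window_def del: upt_Suc)

lemma window_less_iff:
  assumes rs: "rs \<in> admissible n d" and d: "1 \<le> d" and pq: "p < Suc n" "q < Suc n"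
  shows "window n d rs a ! p < window n d rs a ! q \<longleftrightarrow> pos_less d rs (a + p) (a + q)"
  using pos_rank_less_iff[OF rs d, of p q a] pq by (simp add: window_nth)

lemma distinct_window:
  assumes rs: "rs \<in> admissible n d" and d: "1 \<le> d"
  shows "distinct (window n d rs a)"
proof -
  have "window n d rs a ! p \<noteq> window n d rs a ! q" if "p < Suc n" "q < Suc n" "p \<noteq> q" for p q
  proof -
    have "pos_less d rs (a + p) (a + q) \<or> pos_less d rs (a + q) (a + p)" using pos_less_total that by simp
    thus ?thesis using window_less_iff[OF rs d that(1,2), of a] window_less_iff[OF rs d that(2,1), of a] by auto
  qed
  thus ?thesis by (auto simp: distinct_conv_nth)
qed

lemma window_perms:
  assumes rs: "rs \<in> admissible n d" and d: "1 \<le> d"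
  shows "window n d rs a \<in> perms (n + 1)"
proof -
  have dist: "distinct (window n d rs a)" by (rule distinct_window[OF rs d])
  have sub: "set (window n d rs a) \<subseteq> {1..n+1}"
    using pos_rank_bounds by (auto simp: window_def)
  have "card (set (window n d rs a)) = n + 1" using dist by (simp add: distinct_card)
  hence "set (window n d rs a) = {1..n+1}" using sub by (intro card_subset_eq) auto
  thus ?thesis using dist by (simp add: perms_def)
qed

lemma window_avoids312:
  assumes rs: "rs \<in> admissible n d" and d: "1 \<le> d"
  shows "avoids312 (window n d rs a)"
  unfolding avoids312_def
proof
  assume "\<exists>i j k. i < j \<and> j < k \<and> k < length (window n d rs a) \<and>
     window n d rs a ! j < window n d rs a ! k \<and> window n d rs a ! k < window n d rs a ! i"
  then obtain i j k where ijk: "i < j" "j < k" "k < Suc n"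
    and c1: "window n d rs a ! j < window n d rs a ! k" and c2: "window n d rs a ! k < window n d rs a ! i" by auto
  have "pos_less d rs (a + j) (a + k)" using c1 window_less_iff[OF rs d, of j k a] ijk by simp
  moreover have "pos_less d rs (a + k) (a + i)" using c2 window_less_iff[OF rs d, of k i a] ijk by simp
  ultimately show False using ijk by (auto simp: pos_less_def)
qed

lemma window_add_period: "window n d rs (a + d) = window n d rs a"
proof -
  have "pos_rank n d rs (a + d) p = pos_rank n d rs a p" for p
  proof -
    have "pos_less d rs (a + d + q) (a + d + p) = pos_less d rs (a + q) (a + p)" for q
      using pos_less_add_period[of d rs "a + q" "a + p"] by (simp add: algebra_simps)
    thus ?thesis by (simp add: pos_rank_def)
  qed
  thus ?thesis by (simp add: window_def)
qed

lemma window_mod: "window n d rs (a mod d) = window n d rs a"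
proof -
  have "window n d rs (b + d * k) = window n d rs b" for b k
  proof (induction k)
    case (Suc k)
    have "window n d rs (b + d * Suc k) = window n d rs ((b + d * k) + d)" by (simp add: algebra_simps)
    also have "\<dots> = window n d rs (b + d * k)" by (rule window_add_period)
    finally show ?case using Suc by simp
  qed simp
  from this[of "a mod d" "a div d"] show ?thesis by simp
qed

lemma window_link:
  assumes rs: "rs \<in> admissible n d" and d: "1 \<le> d"
  shows "edge_head (window n d rs a) = edge_tail (window n d rs (Suc a))"
proof -
  let ?A = "window n d rs a" and ?B = "window n d rs (Suc a)"
  have "standardize (tl ?A) = standardize (butlast ?B)"
  proof (rule standardize_eq_if_same_order)
    show "distinct (tl ?A)" using distinct_window[OF rs d] by (simp add: distinct_tl)
    show "distinct (butlast ?B)" using distinct_window[OF rs d] by (simp add: distinct_butlast)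
    show "length (tl ?A) = length (butlast ?B)" by simp
    fix i j assume ij: "i < length (tl ?A)" "j < length (tl ?A)"
    hence ij': "i < n" "j < n" by auto
    have "tl ?A ! i < tl ?A ! j \<longleftrightarrow> ?A ! Suc i < ?A ! Suc j" using ij' by (simp add: nth_tl)
    also have "\<dots> \<longleftrightarrow> pos_less d rs (a + Suc i) (a + Suc j)"
      by (rule window_less_iff[OF rs d]) (use ij' in auto)
    also have "\<dots> \<longleftrightarrow> pos_less d rs (Suc a + i) (Suc a + j)" by simp
    also have "\<dots> \<longleftrightarrow> ?B ! i < ?B ! j"
      by (rule window_less_iff[OF rs d, symmetric]) (use ij' in auto)
    also have "\<dots> \<longleftrightarrow> butlast ?B ! i < butlast ?B ! j" using ij' by (simp add: nth_butlast)
    finally show "tl ?A ! i < tl ?A ! j \<longleftrightarrow> butlast ?B ! i < butlast ?B ! j" .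
  qed
  thus ?thesis by (simp add: edge_head_def edge_tail_def)
qed

lemma walk_of_code_closed:
  assumes rs: "rs \<in> admissible n d" and d: "1 \<le> d"
  shows "walk_of_code n d rs \<in> closed_walks n d"
proof -
  have len: "length (walk_of_code n d rs) = d" by (simp add: walk_of_code_def)
  have nth: "i < d \<Longrightarrow> walk_of_code n d rs ! i = window n d rs i" for i by (simp add: walk_of_code_def)
  have "set (walk_of_code n d rs) \<subseteq> Av312 (n + 1)"
    using window_perms[OF rs d] window_avoids312[OF rs d] by (auto simp: walk_of_code_def Av312_def)
  moreover have "\<forall>i. i + 1 < d \<longrightarrow> edge_head (walk_of_code n d rs ! i) = edge_tail (walk_of_code n d rs ! (i + 1))"
    using window_link[OF rs d] nth by simp
  moreover have "edge_head (walk_of_code n d rs ! (d - 1)) = edge_tail (walk_of_code n d rs ! 0)"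
  proof -
    have "walk_of_code n d rs ! 0 = window n d rs (Suc (d - 1))"
      using nth[of 0] d window_add_period[of n d rs 0] by simp
    thus ?thesis using nth[of "d - 1"] d window_link[OF rs d, of "d - 1"] by simp
  qed
  ultimately show ?thesis using len by (simp add: closed_walks_def)
qed

lemma walk_code_walk_of_code:
  assumes rs: "rs \<in> admissible n d" and d: "1 \<le> d"
  shows "walk_code n d (walk_of_code n d rs) = rs"
proof (rule nth_equalityI)
  show "length (walk_code n d (walk_of_code n d rs)) = length rs" using admissibleD(1)[OF rs d] by (simp add: walk_code_def)
  fix l assume "l < length (walk_code n d (walk_of_code n d rs))"
  hence l: "l < d" by (simp add: walk_code_def)
  define b where "b = l + d * n"
  have bn: "n \<le> b" using mult_le_mono1[OF d, of n] unfolding b_def by linarith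
  have bm: "b mod d = l" using l by (simp add: b_def)
  have rb: "rs!(b mod d) \<le> n" by (rule admissibleD(2)[OF rs d])
  have "{j\<in>{1..n}. walk_of_code n d rs!((b-j) mod d)!j < walk_of_code n d rs!((b-j) mod d)!0} = {1..rs!(b mod d)}"
  proof (rule set_eqI)
    fix j
    show "j \<in> {j\<in>{1..n}. walk_of_code n d rs!((b-j) mod d)!j < walk_of_code n d rs!((b-j) mod d)!0} \<longleftrightarrow> j \<in> {1..rs!(b mod d)}"
    proof (cases "j \<in> {1..n}")
      case True
      have "walk_of_code n d rs!((b-j) mod d) = window n d rs (b - j)"
        using d by (simp add: walk_of_code_def window_mod)
      moreover have "window n d rs (b - j) ! j < window n d rs (b - j) ! 0 \<longleftrightarrow> pos_less d rs (b - j + j) (b - j + 0)"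
        by (rule window_less_iff[OF rs d]) (use True in auto)
      moreover have "pos_less d rs (b - j + j) (b - j + 0) \<longleftrightarrow> j \<le> rs!(b mod d)"
        using True bn by (auto simp: pos_less_def)
      ultimately show ?thesis using True rb by auto
    next
      case False thus ?thesis using rb by auto
    qed
  qed
  hence "back_inversions (walk_of_code n d rs) n d b = rs!(b mod d)" by (simp add: back_inversions_def)
  thus "walk_code n d (walk_of_code n d rs) ! l = rs ! l" using l bm by (simp add: walk_code_def b_def)
qed

lemma card_closed_walks_eq_admissible:
  assumes d: "1 \<le> d"
  shows "card (closed_walks n d) = card (admissible n d)"
proof -
  have "walk_code n d ` closed_walks n d = admissible n d"
  proof
    show "walk_code n d ` closed_walks n d \<subseteq> admissible n d" using walk_code_admissible[OF _ d] by blast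
    show "admissible n d \<subseteq> walk_code n d ` closed_walks n d"
    proof
      fix rs assume rs: "rs \<in> admissible n d"
      have "rs = walk_code n d (walk_of_code n d rs)" using walk_code_walk_of_code[OF rs d] by simp
      thus "rs \<in> walk_code n d ` closed_walks n d" using walk_of_code_closed[OF rs d] by blast
    qed
  qed
  thus ?thesis using card_image[OF inj_on_walk_code[OF d, of n]] by simp
qed

theorem theorem5p1:
  fixes n d :: nat
  assumes "1 \<le> n" and "1 \<le> d" and "d \<le> n"
  shows "card (closed_walks n d) = (2 * d) choose d"
proof -
  have "card (closed_walks n d) = card (admissible n d)" by (rule card_closed_walks_eq_admissible) (use assms in auto)
  also have "\<dots> = card (bounded_sum_lists d)" by (rule card_admissible_eq_bounded_sum_lists) (use assms in auto)
  also have "\<dots> = (d + d) choose d" unfolding bounded_sum_lists_def by (rule card_lists_length_sum_le)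
  finally show ?thesis by (simp add: mult_2)
qed

end
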